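(* Let $n_c\ge 3$ and $m\ge 1$ be integers, and let $\mathcal G=(\mathcal V,\mathcal E)$ be the unweighted undirected graph obtained by the following rule (R): take $m$ vertex-disjoint cycles $\mathcal C_0,\dots,\mathcal C_{m-1}$, each with $n_c$ nodes, and for each $p\in\{0,\dots,m-2\}$ identify one node of $\mathcal C_p$ with one node of $\mathcal C_{p+1}$. Consider the Kuramoto model $\dot\theta_i=\omega_i+\sum_j a_{ij}\sin(\theta_j-\theta_i)$ on $\mathcal G$ (with $a_{ij}=1$ if $(i,j)\in\mathcal E$ and $0$ otherwise) with identical natural frequencies. Then every stable phase-locked configuration $\theta^*$ satisfies, for all adjacent nodes $i,j$, that $\theta^*_i-\theta^*_j$ has a representative modulo $2\pi$ in $(-\pi/2,\pi/2)$.
   Context: Phases live in $\mathbb R/2\pi\mathbb Z$. A phase-locked configuration is a solution in which all $\dot\theta_i$ are equal; in the frame rotating at the common natural frequency (equivalently, setting all $\omega_i=0$) it is an equilibrium. It is called stable if it is a Lyapunov stable equilibrium of the dynamics in this rotating frame. *)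

theory Defs
  imports "HOL-Analysis.Analysis"
begin

text \<open>Rule (R): m vertex-disjoint cycles C_0..C_(m-1), each with nc nodes; node k of
cycle p is the pair (p,k) (k < nc), cycle edges (p,k) -- (p,(k+1) mod nc).
For each p < m-1 node (p, a p) of C_p is identified with node (p+1, b p) of C_(p+1).
The graph on the vertex type 'v is the quotient: pi maps the disjoint union of the
cycles onto the vertex set, identifying exactly the pairs in the equivalence relation
generated by the identifications; edges are exactly the images of cycle edges.\<close>

definition cycle_nodes :: "nat \<Rightarrow> nat \<Rightarrow> (nat \<times> nat) set" where
  "cycle_nodes nc m = {(p, k). p < m \<and> k < nc}"

definition ident_rel :: "nat \<Rightarrow> (nat \<Rightarrow> nat) \<Rightarrow> (nat \<Rightarrow> nat) \<Rightarrow> ((nat \<times> nat) \<times> (nat \<times> nat)) set" where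
  "ident_rel m a b = {((p, a p), (Suc p, b p)) | p. p + 1 < m}"

definition rule_R_graph :: "nat \<Rightarrow> nat \<Rightarrow> ('v \<Rightarrow> 'v \<Rightarrow> bool) \<Rightarrow> bool" where
  "rule_R_graph nc m E \<longleftrightarrow>
     (\<exists>(pi :: nat \<times> nat \<Rightarrow> 'v) (a :: nat \<Rightarrow> nat) (b :: nat \<Rightarrow> nat).
        (\<forall>p. p + 1 < m \<longrightarrow> a p < nc \<and> b p < nc) \<and>
        pi ` cycle_nodes nc m = UNIV \<and>
        (\<forall>x\<in>cycle_nodes nc m. \<forall>y\<in>cycle_nodes nc m.
            pi x = pi y \<longleftrightarrow> (x, y) \<in> (ident_rel m a b \<union> (ident_rel m a b)\<inverse>)\<^sup>*) \<and>
        (\<forall>i j. E i j \<longleftrightarrow>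
            (\<exists>p k. p < m \<and> k < nc \<and>
               ((i = pi (p, k) \<and> j = pi (p, (k + 1) mod nc)) \<or>
                (j = pi (p, k) \<and> i = pi (p, (k + 1) mod nc))))))"

text \<open>Kuramoto vector field in the rotating frame (identical natural frequencies):
  theta_i' = sum_j a_ij sin(theta_j - theta_i), a_ij = 1 if (i,j) is an edge, else 0.\<close>

definition kuramoto_field :: "('v::finite \<Rightarrow> 'v \<Rightarrow> bool) \<Rightarrow> real ^ 'v \<Rightarrow> real ^ 'v" where
  "kuramoto_field E \<theta> = (\<chi> i. \<Sum>j\<in>UNIV. (if E i j then 1 else 0) * sin (\<theta> $ j - \<theta> $ i))"

definition is_solution_from0 :: "('a::real_normed_vector \<Rightarrow> 'a) \<Rightarrow> (real \<Rightarrow> 'a) \<Rightarrow> bool" where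
  "is_solution_from0 F x \<longleftrightarrow>
     (\<forall>t\<ge>0. (x has_vector_derivative F (x t)) (at t within {0..}))"

definition lyapunov_stable :: "('a::real_normed_vector \<Rightarrow> 'a) \<Rightarrow> 'a \<Rightarrow> bool" where
  "lyapunov_stable F xs \<longleftrightarrow>
     (\<forall>\<epsilon>>0. \<exists>\<delta>>0. \<forall>x. is_solution_from0 F x \<and> dist (x 0) xs < \<delta> \<longrightarrow>
        (\<forall>t\<ge>0. dist (x t) xs < \<epsilon>))"

definition phase_locked :: "('v::finite \<Rightarrow> 'v \<Rightarrow> bool) \<Rightarrow> real ^ 'v \<Rightarrow> bool" where
  "phase_locked E \<theta> \<longleftrightarrow> kuramoto_field E \<theta> = 0"

end

theory Submission
  imports Defs
begin

text \<open>The Kuramoto field is the negative gradient of the potential \<open>V\<close>, minus the sum of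
  \<open>cos (\<theta>\<^sub>j - \<theta>\<^sub>i)\<close> over the edges. On a chain of cycles glued at single nodes, testing the
  equilibrium equations against node vectors that vary only on one cycle shows that all edges
  of a cycle carry phase differences with a common sine; since these differences sum to zero
  around the cycle, \<open>V\<close> takes only finitely many values at equilibria. If some edge had
  nonpositive cosine, twisting its cycle slightly (that edge against all the others) would
  lower \<open>V\<close> arbitrarily close to the equilibrium. For a gradient flow with finitely many
  critical values this rules out Lyapunov stability: the trajectory from such a point stays
  in a compact set free of equilibria, on which \<open>V\<close> decreases at a definite rate forever.\<close>

section \<open>Global solutions of bounded Lipschitz equations\<close>

lemma integral_from0_has_vector_derivative:
  fixes g :: "real \<Rightarrow> 'a::euclidean_space"
  assumes "continuous_on UNIV g" "t \<ge> 0"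
  shows "((\<lambda>s. integral {0..s} g) has_vector_derivative g t) (at t within {0..})"
proof -
  have "((\<lambda>s. integral {0..s} g) has_vector_derivative g t) (at t within {0..t+1})"
    by (rule integral_has_vector_derivative) (use assms in \<open>auto intro: continuous_on_subset\<close>)
  moreover have "at t within {0..t+1} = at t within {0..}"
    by (rule at_within_nhd[where S="{t - 1 <..< t + 1}"]) auto
  ultimately show ?thesis by simp
qed

lemma mult_exp_neg_le:
  fixes l s :: real
  assumes "l > 0"
  shows "s * exp (- l * s) \<le> 1 / l"
proof -
  have "l * s \<le> exp (l * s)" using exp_ge_add_one_self[of "l * s"] by linarith
  then have "l * s * exp (- l * s) \<le> 1" by (simp add: exp_minus field_simps)
  then show ?thesis using assms by (simp add: field_simps)
qed

context
  fixes F :: "'a::euclidean_space \<Rightarrow> 'a" and L M :: real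
  assumes lipschitz: "L-lipschitz_on UNIV F" and bounded: "\<And>z. norm (F z) \<le> M"
begin

text \<open>Picard iteration for \<open>x t = exp (l * t) *\<^sub>R u t\<close>: with the exponential weight the
  operator is a contraction with factor \<open>L / l\<close> in the sup norm on all of \<open>[0, \<infinity>)\<close>, so a
  single fixed point gives a global solution.\<close>

definition weighted_picard :: "real \<Rightarrow> 'a \<Rightarrow> (real \<Rightarrow>\<^sub>C 'a) \<Rightarrow> real \<Rightarrow> 'a" where
  "weighted_picard l y u t =
     exp (- l * max 0 t) *\<^sub>R (y + integral {0..max 0 t} (\<lambda>s. F (exp (l * s) *\<^sub>R u s)))"

lemma continuous_on_weighted_integrand:
  "continuous_on UNIV (\<lambda>s. F (exp (l * s) *\<^sub>R apply_bcontfun u s))"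
  by (rule continuous_on_compose2[OF lipschitz_on_continuous_on[OF lipschitz]])
     (auto intro!: continuous_intros)

lemma weighted_integrand_integrable:
  "(\<lambda>s. F (exp (l * s) *\<^sub>R apply_bcontfun u s)) integrable_on {0..t}"
  by (rule integrable_continuous_real, rule continuous_on_subset[OF continuous_on_weighted_integrand]) simp

lemma weighted_picard_bcontfun:
  assumes l: "l > 0"
  shows "weighted_picard l y u \<in> bcontfun"
proof (rule bcontfun_normI)
  let ?G = "\<lambda>s. F (exp (l * s) *\<^sub>R u s)"
  have "continuous_on {0..} (\<lambda>s. integral {0..s} ?G)"
    unfolding continuous_on_eq_continuous_within
    using integral_from0_has_vector_derivative[OF continuous_on_weighted_integrand]
      has_vector_derivative_continuous by fastforce
  then have "continuous_on UNIV (\<lambda>t. integral {0..max 0 t} ?G)"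
    by (rule continuous_on_compose2) (auto intro!: continuous_intros)
  then show "continuous_on UNIV (weighted_picard l y u)"
    unfolding weighted_picard_def by (auto intro!: continuous_intros)
  fix t :: real
  let ?s = "max 0 t"
  have s: "?s \<ge> 0" by simp
  have M: "M \<ge> 0" using bounded[of 0] norm_ge_zero order_trans by blast
  have int: "(?G has_integral integral {0..?s} ?G) (cbox 0 ?s)"
    unfolding cbox_interval by (rule integrable_integral, rule weighted_integrand_integrable)
  have "norm (integral {0..?s} ?G) \<le> M * ?s"
    using has_integral_bound[OF M int] bounded s by simp
  then have "norm (weighted_picard l y u t) \<le> exp (- l * ?s) * norm y + M * (?s * exp (- l * ?s))"
    unfolding weighted_picard_def by (simp add: algebra_simps norm_triangle_le mult_left_mono)
  also have "\<dots> \<le> norm y + M * (1 / l)"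
    using l s M mult_exp_neg_le[OF l, of ?s]
    by (intro add_mono mult_left_mono) (auto simp: mult_left_le_one_le)
  finally show "norm (weighted_picard l y u t) \<le> norm y + M / l" by simp
qed

lemma dist_weighted_picard_le:
  assumes l: "l > 0"
  shows "dist (weighted_picard l y u t) (weighted_picard l y v t) \<le> L / l * dist u v"
proof -
  have L: "L \<ge> 0" using lipschitz_on_nonneg[OF lipschitz] .
  let ?s = "max 0 t" and ?D = "dist u v"
  let ?G = "\<lambda>u s. F (exp (l * s) *\<^sub>R apply_bcontfun u s)"
  have s: "?s \<ge> 0" by simp
  have pointwise: "norm (?G u r - ?G v r) \<le> L * ?D * exp (l * r)" for r
  proof -
    have "norm (?G u r - ?G v r) \<le> L * dist (exp (l * r) *\<^sub>R u r) (exp (l * r) *\<^sub>R v r)"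
      using lipschitz_onD[OF lipschitz] by (simp add: dist_norm)
    also have "\<dots> = L * (exp (l * r) * dist (u r) (v r))"
      by (simp add: dist_norm scaleR_diff_right[symmetric])
    also have "\<dots> \<le> L * (exp (l * r) * ?D)"
      using L by (intro mult_left_mono dist_bounded) auto
    finally show ?thesis by (simp add: algebra_simps)
  qed
  have ftc: "((\<lambda>r. L * ?D * exp (l * r)) has_integral L * ?D * exp (l * ?s) / l - L * ?D * exp (l * 0) / l) {0..?s}"
  proof (rule fundamental_theorem_of_calculus[OF s])
    fix r
    show "((\<lambda>r. L * ?D * exp (l * r) / l) has_vector_derivative L * ?D * exp (l * r)) (at r within {0..?s})"
      unfolding has_real_derivative_iff_has_vector_derivative[symmetric]
      using l by (auto intro!: derivative_eq_intros)
  qed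
  have "norm (integral {0..?s} (?G u) - integral {0..?s} (?G v)) \<le> L * ?D * exp (l * ?s) / l - L * ?D / l"
    using integral_norm_bound_integral[OF integrable_diff has_integral_integrable[OF ftc] pointwise]
      integral_diff[OF weighted_integrand_integrable weighted_integrand_integrable]
      integral_unique[OF ftc] weighted_integrand_integrable by simp
  then have "dist (weighted_picard l y u t) (weighted_picard l y v t)
      \<le> exp (- l * ?s) * (L * ?D * exp (l * ?s) / l - L * ?D / l)"
    unfolding weighted_picard_def dist_norm
    by (simp add: scaleR_diff_right[symmetric] mult_left_mono)
  also have "\<dots> = L / l * ?D * (1 - exp (- l * ?s))"
    using l by (simp add: field_simps exp_minus)
  also have "\<dots> \<le> L / l * ?D * 1"
    using l L s by (intro mult_left_mono) auto
  finally show ?thesis by simp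
qed

lemma bounded_lipschitz_solution_exists: "\<exists>x. x 0 = y \<and> is_solution_from0 F x"
proof -
  define l where "l = 2 * L + 1"
  have l: "l > 0" "L / l \<le> 1 / 2"
    using lipschitz_on_nonneg[OF lipschitz] by (auto simp: l_def field_simps)
  define P where "P u = Bcontfun (weighted_picard l y u)" for u
  have "dist (P u) (P v) \<le> 1 / 2 * dist u v" for u v
  proof (rule dist_bound)
    fix t
    show "dist (apply_bcontfun (P u) t) (apply_bcontfun (P v) t) \<le> 1 / 2 * dist u v"
      unfolding P_def Bcontfun_inverse[OF weighted_picard_bcontfun[OF l(1)]]
      using dist_weighted_picard_le[OF l(1)] l(2) order_trans mult_right_mono zero_le_dist by metis
  qed
  then obtain u where "P u = u" using banach_fix_type[of "1/2" P] by auto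
  then have u: "apply_bcontfun u t = weighted_picard l y u t" for t
    unfolding P_def by (metis Bcontfun_inverse weighted_picard_bcontfun[OF l(1)])
  define x where "x t = exp (l * t) *\<^sub>R apply_bcontfun u t" for t
  have cont: "continuous_on UNIV (\<lambda>s. F (x s))"
    unfolding x_def by (rule continuous_on_weighted_integrand)
  have x_eq: "x t = y + integral {0..t} (\<lambda>s. F (x s))" if "t \<ge> 0" for t
  proof -
    have "x t = exp (l * t) *\<^sub>R exp (- l * t) *\<^sub>R (y + integral {0..t} (\<lambda>s. F (x s)))"
      using that u[of t] by (simp add: x_def weighted_picard_def)
    then show ?thesis by (simp add: exp_minus)
  qed
  show ?thesis
  proof (intro exI conjI)
    show "x 0 = y" using x_eq[of 0] by simp
    show "is_solution_from0 F x"
      unfolding is_solution_from0_def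
    proof (intro allI impI)
      fix t :: real assume t: "t \<ge> 0"
      have "((\<lambda>t. y + integral {0..t} (\<lambda>s. F (x s))) has_vector_derivative F (x t)) (at t within {0..})"
        using has_vector_derivative_add[OF has_vector_derivative_const
            integral_from0_has_vector_derivative[OF cont t]] by simp
      then show "(x has_vector_derivative F (x t)) (at t within {0..})"
        by (rule has_vector_derivative_transform[rotated 2]) (use t x_eq in auto)
    qed
  qed
qed

end

section \<open>Gradient flows\<close>

lemma potential_decrease_along_solution:
  fixes F :: "'a::euclidean_space \<Rightarrow> 'a" and V :: "'a \<Rightarrow> real"
  assumes grad: "\<And>z. (V has_derivative (\<lambda>h. - (F z \<bullet> h))) (at z)"
    and sol: "is_solution_from0 F x" and t: "t \<ge> 0"
    and lower: "\<And>s. 0 \<le> s \<Longrightarrow> s \<le> t \<Longrightarrow> \<mu> \<le> F (x s) \<bullet> F (x s)"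
  shows "V (x t) \<le> V (x 0) - \<mu> * t"
proof -
  have deriv: "((\<lambda>s. V (x s)) has_derivative (\<lambda>h. - (h * (F (x s) \<bullet> F (x s))))) (at s within {0..t})"
    if "0 \<le> s" "s \<le> t" for s
  proof -
    have "(x has_derivative (\<lambda>h. h *\<^sub>R F (x s))) (at s within {0..t})"
      using sol that unfolding is_solution_from0_def has_vector_derivative_def
      by (meson atLeastAtMost_iff atLeast_iff has_derivative_subset subsetI)
    from has_derivative_compose[OF this grad] show ?thesis by simp
  qed
  then obtain \<xi> where "\<xi> \<in> {0..t}" "V (x t) - V (x 0) = - (t * (F (x \<xi>) \<bullet> F (x \<xi>)))"
    using mvt_very_simple[OF t deriv] by auto
  moreover from this have "\<mu> * t \<le> t * (F (x \<xi>) \<bullet> F (x \<xi>))"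
    using lower[of \<xi>] t by (metis atLeastAtMost_iff mult.commute mult_left_mono)
  ultimately show ?thesis by simp
qed

lemma not_lyapunov_stable_if_potential_not_local_min:
  fixes F :: "'a::euclidean_space \<Rightarrow> 'a" and V :: "'a \<Rightarrow> real"
  assumes lipschitz: "L-lipschitz_on UNIV F" and bounded: "\<And>z. norm (F z) \<le> M"
    and grad: "\<And>z. (V has_derivative (\<lambda>h. - (F z \<bullet> h))) (at z)"
    and critical_values: "finite (V ` {z. F z = 0})"
    and not_min: "\<And>\<delta>. \<delta> > 0 \<Longrightarrow> \<exists>y. dist y \<theta> < \<delta> \<and> V y < V \<theta>"
  shows "\<not> lyapunov_stable F \<theta>"
proof
  assume stable: "lyapunov_stable F \<theta>"
  obtain g where g: "g > 0" and avoid: "\<And>v. v \<in> V ` {z. F z = 0} \<Longrightarrow> v \<noteq> V \<theta> \<Longrightarrow> g \<le> \<bar>V \<theta> - v\<bar>"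
    using finite_set_avoid[OF critical_values, of "V \<theta>"] unfolding dist_real_def by blast
  have gap: "V z \<le> V \<theta> - g" if "F z = 0" "V z < V \<theta>" for z
    using avoid[of "V z"] that by auto
  have "continuous_on UNIV V"
    using grad by (intro has_derivative_continuous_on) (auto intro: has_derivative_at_withinI)
  then obtain d where d: "d > 0" and near: "\<And>z. dist z \<theta> < d \<Longrightarrow> \<bar>V z - V \<theta>\<bar> < g"
    using g unfolding continuous_on_iff dist_real_def by (meson UNIV_I)
  obtain \<delta> where \<delta>: "\<delta> > 0"
    and stays: "\<And>x. is_solution_from0 F x \<Longrightarrow> dist (x 0) \<theta> < \<delta> \<Longrightarrow> \<forall>t\<ge>0. dist (x t) \<theta> < d / 2"
    using stable d unfolding lyapunov_stable_def by (meson half_gt_zero)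
  obtain y where y: "dist y \<theta> < \<delta>" "V y < V \<theta>"
    using not_min[OF \<delta>] by blast
  obtain x where x0: "x 0 = y" and sol: "is_solution_from0 F x"
    using bounded_lipschitz_solution_exists[OF lipschitz bounded] by blast
  define K where "K = cball \<theta> (d / 2) \<inter> {z. V z \<le> V y}"
  have "compact K"
    unfolding K_def by (intro compact_Int_closed compact_cball closed_Collect_le continuous_on_const) fact
  have xK: "x t \<in> K" if "t \<ge> 0" for t
    using stays[OF sol] potential_decrease_along_solution[OF grad sol that, of 0] x0 y(1) that
    by (auto simp: K_def dist_commute less_imp_le)
  have no_equilibrium: "F z \<noteq> 0" if "z \<in> K" for z
  proof
    assume "F z = 0"
    moreover have "V z < V \<theta>" using that y(2) by (auto simp: K_def)
    moreover have "dist z \<theta> < d" using that d by (auto simp: K_def dist_commute)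
    ultimately show False using gap near by fastforce
  qed
  have "K \<noteq> {}" using xK[of 0] by auto
  obtain z0 where z0: "z0 \<in> K" "\<And>z. z \<in> K \<Longrightarrow> F z0 \<bullet> F z0 \<le> F z \<bullet> F z"
    using continuous_attains_inf[OF \<open>compact K\<close> \<open>K \<noteq> {}\<close>, of "\<lambda>z. F z \<bullet> F z"]
      lipschitz_on_continuous_on[OF lipschitz]
    by (auto intro!: continuous_intros intro: continuous_on_subset)
  obtain z1 where z1: "z1 \<in> K" "\<And>z. z \<in> K \<Longrightarrow> V z1 \<le> V z"
    using continuous_attains_inf[OF \<open>compact K\<close> \<open>K \<noteq> {}\<close> continuous_on_subset[OF \<open>continuous_on UNIV V\<close>]]
    by auto
  define \<mu> where "\<mu> = F z0 \<bullet> F z0"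
  have \<mu>: "\<mu> > 0" using no_equilibrium[OF z0(1)] by (simp add: \<mu>_def)
  define T where "T = (V y - V z1 + 1) / \<mu>"
  have T: "T \<ge> 0" using z1(1) \<mu> by (auto simp: T_def K_def)
  have "V (x T) \<le> V y - \<mu> * T"
    using potential_decrease_along_solution[OF grad sol T] x0 z0(2) xK by (simp add: \<mu>_def)
  also have "\<dots> < V z1" using \<mu> by (simp add: T_def)
  finally show False using z1(2)[OF xK[OF T]] by simp
qed

lemma abs_sin_diff_le: "\<bar>sin x - sin y\<bar> \<le> \<bar>x - y\<bar>" for x y :: real
proof -
  have "\<bar>sin x - sin y\<bar> = 2 * \<bar>sin ((x - y) / 2)\<bar> * \<bar>cos ((x + y) / 2)\<bar>"
    by (simp add: sin_diff_sin abs_mult)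
  also have "\<dots> \<le> 2 * \<bar>(x - y) / 2\<bar> * 1"
    by (intro mult_mono abs_sin_x_le_abs_x) auto
  finally show ?thesis by simp
qed

lemma mult_one_minus_cos_less:
  fixes K t :: real
  assumes K: "K \<ge> 2" and t: "0 < t" "t \<le> pi / (2 * K)"
  shows "K * (1 - cos t) < 1 - cos (K * t)"
proof -
  have "\<exists>\<xi>. 0 < \<xi> \<and> \<xi> < t \<and> (1 - cos (K * t) - K * (1 - cos t)) - (1 - cos (K * 0) - K * (1 - cos 0))
              = (t - 0) * (K * sin (K * \<xi>) - K * sin \<xi>)"
    by (rule MVT2[OF t(1)]) (auto intro!: derivative_eq_intros)
  then obtain \<xi> where \<xi>: "0 < \<xi>" "\<xi> < t"
    and mvt: "1 - cos (K * t) - K * (1 - cos t) = t * (K * sin (K * \<xi>) - K * sin \<xi>)"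
    by auto
  have "K * \<xi> < K * t" using \<xi> K by simp
  moreover have "K * t \<le> pi / 2" using t(2) K by (simp add: field_simps)
  ultimately have "K * \<xi> \<le> pi / 2" by simp
  moreover have "\<xi> < K * \<xi>" using \<xi> K by simp
  ultimately have "sin \<xi> < sin (K * \<xi>)"
    by (intro sin_monotone_2pi) (use \<xi> pi_gt_zero in linarith)+
  then have "0 < t * (K * (sin (K * \<xi>) - sin \<xi>))" using t K by (intro mult_pos_pos) auto
  then show ?thesis using mvt by (simp add: algebra_simps)
qed

lemma sin_mult_less:
  fixes K t :: real
  assumes K: "K \<ge> 2" and t: "0 < t" "t \<le> pi / (2 * K)"
  shows "sin (K * t) < K * sin t"
proof -
  have "\<exists>\<xi>. 0 < \<xi> \<and> \<xi> < t \<and> (K * sin t - sin (K * t)) - (K * sin 0 - sin (K * 0))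
              = (t - 0) * (K * cos \<xi> - K * cos (K * \<xi>))"
    by (rule MVT2[OF t(1)]) (auto intro!: derivative_eq_intros)
  then obtain \<xi> where \<xi>: "0 < \<xi>" "\<xi> < t"
    and mvt: "K * sin t - sin (K * t) = t * (K * cos \<xi> - K * cos (K * \<xi>))"
    by auto
  have "K * \<xi> < K * t" using \<xi> K by simp
  moreover have "K * t \<le> pi / 2" using t(2) K by (simp add: field_simps)
  ultimately have "K * \<xi> \<le> pi / 2" by simp
  moreover have "\<xi> < K * \<xi>" using \<xi> K by simp
  ultimately have "cos (K * \<xi>) < cos \<xi>"
    by (intro cos_monotone_0_pi) (use \<xi> pi_gt_zero in linarith)+
  then have "0 < t * (K * (cos \<xi> - cos (K * \<xi>)))" using t K by (intro mult_pos_pos) auto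
  then show ?thesis using mvt by (simp add: algebra_simps)
qed

lemma cos_pos_imp_shift_in_half_pi:
  fixes x :: real
  assumes "cos x > 0"
  shows "\<exists>k::int. - (pi / 2) < x + 2 * pi * k \<and> x + 2 * pi * k < pi / 2"
proof -
  define k where "k = - \<lfloor>(x + pi) / (2 * pi)\<rfloor>"
  define r where "r = x + 2 * pi * k"
  have "- pi \<le> r" "r < pi"
    unfolding r_def k_def using floor_divide_lower[of "2 * pi" "x + pi"]
      floor_divide_upper[of "2 * pi" "x + pi"] by (auto simp: algebra_simps)
  moreover have "cos r > 0"
    using assms sin_cos_eq_iff[of r x] unfolding r_def by auto
  ultimately have "\<bar>r\<bar> < pi / 2"
    using cos_monotone_0_pi_le[of "pi / 2" "\<bar>r\<bar>"] by (force simp: abs_if)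
  then show ?thesis unfolding r_def abs_less_iff by (intro exI[of _ k]) auto
qed

lemma sin_eq_arcsin_cases:
  fixes x s :: real
  assumes "sin x = s"
  obtains \<sigma> j :: int where "\<sigma> \<in> {0, 1}"
    "x = arcsin s + \<sigma> * (pi - 2 * arcsin s) + 2 * pi * j"
    "cos x = (1 - 2 * \<sigma>) * cos (arcsin s)"
proof -
  let ?a = "arcsin s"
  have "- 1 \<le> s" "s \<le> 1" using assms by auto
  then have sin_a: "sin ?a = s" by simp
  then have "cos x ^ 2 = cos ?a ^ 2" using assms by (simp add: cos_squared_eq)
  then consider "cos x = cos ?a" | "cos x = - cos ?a" by (auto simp: power2_eq_iff)
  then show thesis
  proof cases
    case 1
    then obtain j :: int where "x = ?a + 2 * pi * j"
      using sin_cos_eq_iff[of x ?a] sin_a assms by auto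
    then show thesis using that[of 0 j] 1 by simp
  next
    case 2
    then have "sin x = sin (pi - ?a) \<and> cos x = cos (pi - ?a)" using sin_a assms by simp
    then obtain j :: int where "x = pi - ?a + 2 * pi * j" using sin_cos_eq_iff by blast
    then show thesis using that[of 1 j] 2 by (simp add: algebra_simps)
  qed
qed

text \<open>If \<open>n\<close> angles share their sine and sum to zero, each is \<open>arcsin s\<close> or \<open>pi - arcsin s\<close>
  modulo \<open>2 pi\<close>; with \<open>\<sigma>\<close> angles of the second kind the cosines sum to \<open>j * cos (arcsin s)\<close>
  for \<open>j = n - 2 \<sigma>\<close>, and the zero sum forces \<open>j * arcsin s \<in> pi \<int>\<close>.\<close>

definition cycle_cos_values :: "nat \<Rightarrow> real set" where
  "cycle_cos_values n = (\<lambda>(j, t). of_int j * cos (pi * of_int t / of_int j)) `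
     ({- int n..int n} \<times> {- int n..int n})"

lemma finite_cycle_cos_values: "finite (cycle_cos_values n)"
  unfolding cycle_cos_values_def by simp

lemma sum_cos_in_cycle_cos_values:
  fixes x :: "nat \<Rightarrow> real"
  assumes same_sin: "\<And>k. k < n \<Longrightarrow> sin (x k) = s" and sum_zero: "(\<Sum>k<n. x k) = 0"
  shows "(\<Sum>k<n. cos (x k)) \<in> cycle_cos_values n"
proof -
  let ?a = "arcsin s"
  have "\<forall>k<n. \<exists>(\<sigma> :: int) (j :: int). \<sigma> \<in> {0::int, 1} \<and> x k = ?a + \<sigma> * (pi - 2 * ?a) + 2 * pi * j \<and>
          cos (x k) = (1 - 2 * \<sigma>) * cos ?a"
    by (metis sin_eq_arcsin_cases[OF same_sin])
  then obtain \<sigma> J :: "nat \<Rightarrow> int" where \<sigma>: "\<And>k. k < n \<Longrightarrow> \<sigma> k \<in> {0, 1}"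
    and x: "\<And>k. k < n \<Longrightarrow> x k = ?a + \<sigma> k * (pi - 2 * ?a) + 2 * pi * J k"
    and cos_x: "\<And>k. k < n \<Longrightarrow> cos (x k) = (1 - 2 * \<sigma> k) * cos ?a"
    by metis
  define S where "S = (\<Sum>k<n. \<sigma> k)"
  define j where "j = int n - 2 * S"
  define t where "t = - S - 2 * (\<Sum>k<n. J k)"
  have "S \<le> (\<Sum>k<n. 1)" unfolding S_def using \<sigma> by (intro sum_mono) fastforce
  moreover have "0 \<le> S" unfolding S_def using \<sigma> by (intro sum_nonneg) fastforce
  ultimately have S: "0 \<le> S" "S \<le> int n" by auto
  have "0 = (\<Sum>k<n. ?a + \<sigma> k * (pi - 2 * ?a) + 2 * pi * J k)"
    using sum_zero x by simp
  also have "\<dots> = real n * ?a + of_int S * (pi - 2 * ?a) + 2 * pi * of_int (\<Sum>k<n. J k)"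
    by (simp add: sum.distrib S_def sum_distrib_left sum_distrib_right)
  finally have ja: "of_int j * ?a = pi * of_int t"
    by (simp add: j_def t_def algebra_simps)
  have sum_cos: "(\<Sum>k<n. cos (x k)) = of_int j * cos ?a"
    by (simp add: cos_x j_def S_def sum_distrib_right[symmetric] sum_subtractf sum_distrib_left[symmetric])
  have j: "\<bar>j\<bar> \<le> int n" using S by (simp add: j_def)
  show ?thesis
  proof (cases "j = 0")
    case True
    then show ?thesis
      using sum_cos unfolding cycle_cos_values_def by (auto intro!: image_eqI[where x = "(0, 0)"])
  next
    case False
    then have "n > 0" using S j_def by auto
    then have "\<bar>?a\<bar> \<le> pi / 2"
      using arcsin_bounded[of s] same_sin[of 0] by auto
    moreover have "\<bar>of_int j\<bar> \<le> real n"
      using j by (metis of_int_abs of_int_le_iff of_int_of_nat_eq)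
    ultimately have "\<bar>of_int j * ?a\<bar> \<le> real n * (pi / 2)"
      unfolding abs_mult by (intro mult_mono) auto
    then have "pi * \<bar>of_int t\<bar> \<le> pi * real n"
      unfolding ja abs_mult using pi_gt_zero by simp
    then have "\<bar>t\<bar> \<le> int n" using pi_gt_zero by simp
    moreover have "?a = pi * of_int t / of_int j" using ja False by (simp add: field_simps)
    ultimately show ?thesis
      using sum_cos j unfolding cycle_cos_values_def by (auto intro!: image_eqI[where x = "(j, t)"])
  qed
qed

text \<open>The shifts (\<open>- (n - 1) u\<close> on edge \<open>k0\<close>, \<open>u\<close> elsewhere) sum to zero, so they are realised
  by a node vector. Bounding the other cosines by \<open>c = - cos (d k0)\<close> reduces the change to
  \<open>c (K (1 - cos t) - (1 - cos (K t))) - \<bar>s\<bar> (K sin t - sin (K t))\<close> with \<open>K = n - 1\<close>, which is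
  negative by the two inequalities above.\<close>

lemma cycle_twist_lowers_energy:
  fixes d :: "nat \<Rightarrow> real" and t :: real
  assumes n: "n \<ge> 3" and k0: "k0 < n"
    and same_sin: "\<And>k. k < n \<Longrightarrow> sin (d k) = sin (d k0)"
    and cos_nonpos: "cos (d k0) \<le> 0"
    and t: "0 < t" "t \<le> pi / (2 * (real n - 1))"
    and u: "u = (if sin (d k0) \<ge> 0 then - t else t)"
  shows "(\<Sum>k<n. cos (d k) - cos (d k + (if k = k0 then - (real n - 1) * u else u))) < 0"
proof -
  define K where "K = real n - 1"
  define s where "s = sin (d k0)"
  define c where "c = - cos (d k0)"
  have K: "K \<ge> 2" using n by (simp add: K_def)
  have c: "c \<ge> 0" using cos_nonpos by (simp add: c_def)
  have cs: "c\<^sup>2 + s\<^sup>2 = 1" by (simp add: c_def s_def)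
  have twist: "cos (d k) - cos (d k + e) = cos (d k) * (1 - cos e) + s * sin e" if "k < n" for k e
    using same_sin[OF that] by (simp add: cos_add s_def algebra_simps)
  have cos_le: "cos (d k) \<le> c" if "k < n" for k
  proof -
    have "(cos (d k))\<^sup>2 = c\<^sup>2" using same_sin[OF that] cs by (simp add: cos_squared_eq s_def)
    then show ?thesis using c by (metis abs_le_square_iff abs_of_nonneg abs_ge_self order.trans)
  qed
  have other: "cos (d k) - cos (d k + u) \<le> c * (1 - cos u) + s * sin u" if "k < n" for k
    using twist[OF that] cos_le[OF that] by (simp add: mult_right_mono)
  have "(\<Sum>k<n. cos (d k) - cos (d k + (if k = k0 then - K * u else u)))
      = (cos (d k0) - cos (d k0 - K * u)) + (\<Sum>k\<in>{..<n} - {k0}. cos (d k) - cos (d k + u))"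
    using k0 by (subst sum.remove[of _ k0]) auto
  also have "\<dots> \<le> (- c * (1 - cos (K * u)) - s * sin (K * u)) + (\<Sum>k\<in>{..<n} - {k0}. c * (1 - cos u) + s * sin u)"
    using twist[OF k0, of "- K * u"] other by (intro add_mono sum_mono) (auto simp: c_def)
  also have "\<dots> = - c * (1 - cos (K * u)) - s * sin (K * u) + K * (c * (1 - cos u) + s * sin u)"
    using k0 by (simp add: K_def of_nat_diff)
  also have "\<dots> = c * (K * (1 - cos t) - (1 - cos (K * t))) - \<bar>s\<bar> * (K * sin t - sin (K * t))"
    by (cases "s \<ge> 0") (simp_all add: u[folded s_def] algebra_simps)
  also have "\<dots> < 0"
  proof -
    have X: "K * (1 - cos t) - (1 - cos (K * t)) < 0" using mult_one_minus_cos_less[OF K t[folded K_def]] by simp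
    have Y: "K * sin t - sin (K * t) > 0" using sin_mult_less[OF K t[folded K_def]] by simp
    have "c > 0 \<or> \<bar>s\<bar> > 0" using c cs by (cases "c = 0") auto
    then show ?thesis
      using X Y c mult_pos_neg[of c] mult_pos_pos[of "\<bar>s\<bar>"] mult_nonneg_nonpos[of c]
      by (smt (verit) abs_ge_zero mult_nonneg_nonneg)
  qed
  finally show ?thesis unfolding K_def .
qed

lemma kuramoto_field_component:
  "kuramoto_field E z $ i = (\<Sum>j\<in>UNIV. (if E i j then 1 else 0) * sin (z $ j - z $ i))"
  unfolding kuramoto_field_def by simp

lemma norm_kuramoto_field_le:
  fixes E :: "'v::finite \<Rightarrow> 'v \<Rightarrow> bool"
  shows "norm (kuramoto_field E z) \<le> real CARD('v) ^ 2"
proof -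
  have component: "\<bar>kuramoto_field E z $ i\<bar> \<le> real CARD('v)" for i
  proof -
    have "\<bar>kuramoto_field E z $ i\<bar> \<le> (\<Sum>j\<in>UNIV. \<bar>(if E i j then 1 else 0) * sin (z $ j - z $ i)\<bar>)"
      unfolding kuramoto_field_component by (rule sum_abs)
    also have "\<dots> \<le> (\<Sum>j\<in>(UNIV::'v set). 1)"
      by (intro sum_mono) (simp add: abs_mult)
    finally show ?thesis by simp
  qed
  have "norm (kuramoto_field E z) \<le> (\<Sum>i\<in>UNIV. \<bar>kuramoto_field E z $ i\<bar>)" by (rule norm_le_l1_cart)
  also have "\<dots> \<le> (\<Sum>i\<in>(UNIV::'v set). real CARD('v))" by (intro sum_mono component)
  finally show ?thesis by (simp add: power2_eq_square)
qed

lemma kuramoto_field_lipschitz: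
  fixes E :: "'v::finite \<Rightarrow> 'v \<Rightarrow> bool"
  shows "(2 * real CARD('v) ^ 2)-lipschitz_on UNIV (kuramoto_field E)"
proof (rule lipschitz_onI)
  fix z w :: "real ^ 'v"
  let ?F = "kuramoto_field E"
  have component: "\<bar>(?F z - ?F w) $ i\<bar> \<le> real CARD('v) * (2 * dist z w)" for i
  proof -
    have "\<bar>(?F z - ?F w) $ i\<bar>
        = \<bar>\<Sum>j\<in>UNIV. (if E i j then 1 else 0) * (sin (z $ j - z $ i) - sin (w $ j - w $ i))\<bar>"
      unfolding vector_minus_component kuramoto_field_component
      by (simp add: sum_subtractf algebra_simps)
    also have "\<dots> \<le> (\<Sum>j\<in>UNIV. \<bar>sin (z $ j - z $ i) - sin (w $ j - w $ i)\<bar>)"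
      by (rule order_trans[OF sum_abs sum_mono]) (simp add: abs_mult)
    also have "\<dots> \<le> (\<Sum>j\<in>(UNIV::'v set). 2 * dist z w)"
    proof (rule sum_mono)
      fix j
      have "\<bar>sin (z $ j - z $ i) - sin (w $ j - w $ i)\<bar> \<le> \<bar>(z - w) $ j\<bar> + \<bar>(z - w) $ i\<bar>"
        using abs_sin_diff_le[of "z $ j - z $ i" "w $ j - w $ i"] by simp
      also have "\<dots> \<le> 2 * dist z w"
        using component_le_norm_cart[of "z - w" i] component_le_norm_cart[of "z - w" j]
        by (simp add: dist_norm)
      finally show "\<bar>sin (z $ j - z $ i) - sin (w $ j - w $ i)\<bar> \<le> 2 * dist z w" .
    qed
    finally show ?thesis by simp
  qed
  have "dist (?F z) (?F w) \<le> (\<Sum>i\<in>UNIV. \<bar>(?F z - ?F w) $ i\<bar>)"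
    unfolding dist_norm by (rule norm_le_l1_cart)
  also have "\<dots> \<le> (\<Sum>i\<in>(UNIV::'v set). real CARD('v) * (2 * dist z w))" by (intro sum_mono component)
  finally show "dist (?F z) (?F w) \<le> 2 * real CARD('v) ^ 2 * dist z w"
    by (simp add: power2_eq_square)
qed simp

section \<open>Chains of cycles\<close>

locale cactus =
  fixes nc m :: nat and node :: "nat \<times> nat \<Rightarrow> 'v::finite" and a b :: "nat \<Rightarrow> nat"
    and E :: "'v \<Rightarrow> 'v \<Rightarrow> bool"
  assumes nc_ge_3: "nc \<ge> 3"
    and attach_less: "\<And>p. p + 1 < m \<Longrightarrow> a p < nc \<and> b p < nc"
    and node_surj: "node ` cycle_nodes nc m = UNIV"
    and node_eq_iff: "\<And>x y. x \<in> cycle_nodes nc m \<Longrightarrow> y \<in> cycle_nodes nc m \<Longrightarrow>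
        node x = node y \<longleftrightarrow> (x, y) \<in> (ident_rel m a b \<union> (ident_rel m a b)\<inverse>)\<^sup>*"
    and edge_iff: "\<And>i j. E i j \<longleftrightarrow>
        (\<exists>p k. p < m \<and> k < nc \<and>
           ((i = node (p, k) \<and> j = node (p, (k + 1) mod nc)) \<or>
            (j = node (p, k) \<and> i = node (p, (k + 1) mod nc))))"
begin

definition linked :: "nat \<times> nat \<Rightarrow> nat \<times> nat \<Rightarrow> bool" where
  "linked x y \<longleftrightarrow> fst x < fst y \<and> snd x = a (fst x) \<and> snd y = b (fst y - 1) \<and>
     (\<forall>r. fst x < r \<and> r < fst y \<longrightarrow> b (r - 1) = a r)"

lemma ident_rel_sym_cases:
  assumes "(y, z) \<in> ident_rel m a b \<union> (ident_rel m a b)\<inverse>"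
  obtains p where "y = (p, a p)" "z = (Suc p, b p)" | p where "z = (p, a p)" "y = (Suc p, b p)"
  using assms unfolding ident_rel_def by auto

lemma linked_step_from_lower:
  assumes xy: "linked x y" and yz: "(y, z) \<in> ident_rel m a b \<union> (ident_rel m a b)\<inverse>"
  shows "x = z \<or> linked x z"
  using yz
proof (cases rule: ident_rel_sym_cases)
  case (1 p)
  then show ?thesis using xy unfolding linked_def by (auto simp: less_Suc_eq)
next
  case (2 p)
  show ?thesis
  proof (cases "fst x = p")
    case True
    then show ?thesis using xy 2 unfolding linked_def by (cases x) auto
  next
    case False
    then show ?thesis using xy 2 unfolding linked_def by auto
  qed
qed

lemma linked_step_from_upper:
  assumes yx: "linked y x" and yz: "(y, z) \<in> ident_rel m a b \<union> (ident_rel m a b)\<inverse>"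
  shows "x = z \<or> linked z x"
  using yz
proof (cases rule: ident_rel_sym_cases)
  case (1 p)
  show ?thesis
  proof (cases "fst x = Suc p")
    case True
    then show ?thesis using yx 1 unfolding linked_def by (cases x) auto
  next
    case False
    then show ?thesis using yx 1 unfolding linked_def by auto
  qed
next
  case (2 p)
  have "b (r - 1) = a r" if "p < r" "r < fst x" for r
    using yx 2 that unfolding linked_def by (cases "r = Suc p") auto
  then show ?thesis using yx 2 unfolding linked_def by auto
qed

lemma ident_closure_linked:
  assumes "(x, y) \<in> (ident_rel m a b \<union> (ident_rel m a b)\<inverse>)\<^sup>*"
  shows "x = y \<or> linked x y \<or> linked y x"
  using assms
proof (induction rule: rtrancl_induct)
  case (step y z)
  from step.IH consider "x = y" | "linked x y" | "linked y x" by blast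
  then show ?case
  proof cases
    case 1
    with step.hyps(2) show ?thesis by (cases rule: ident_rel_sym_cases) (auto simp: linked_def)
  qed (use step.hyps(2) linked_step_from_lower linked_step_from_upper in blast)+
qed simp

lemma node_eq_cases:
  assumes "x \<in> cycle_nodes nc m" "y \<in> cycle_nodes nc m" "node x = node y"
  shows "x = y \<or> linked x y \<or> linked y x"
  using ident_closure_linked node_eq_iff assms by blast

lemma node_eq_same_cycle:
  assumes "x \<in> cycle_nodes nc m" "y \<in> cycle_nodes nc m" "node x = node y" "fst x = fst y"
  shows "x = y"
  using node_eq_cases[OF assms(1-3)] assms(4) unfolding linked_def by auto

lemma node_eq_linked:
  assumes "x \<in> cycle_nodes nc m" "y \<in> cycle_nodes nc m" "node x = node y" "fst x < fst y"
  shows "linked x y"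
  using node_eq_cases[OF assms(1-3)] assms(4) unfolding linked_def by auto

lemma linked_lower_unique: "linked x y \<Longrightarrow> linked x' y' \<Longrightarrow> fst x = fst x' \<Longrightarrow> snd x = snd x'"
  unfolding linked_def by auto

definition cyc_succ :: "nat \<Rightarrow> nat" where "cyc_succ k = (k + 1) mod nc"

lemma cyc_succ_less: "cyc_succ k < nc"
  using nc_ge_3 by (simp add: cyc_succ_def)

lemma cyc_succ_cases:
  assumes "k < nc"
  shows "(k + 1 < nc \<and> cyc_succ k = k + 1) \<or> (k + 1 = nc \<and> cyc_succ k = 0)"
proof (cases "k + 1 < nc")
  case False
  then have "k + 1 = nc" using assms by simp
  then show ?thesis by (simp add: cyc_succ_def)
qed (simp add: cyc_succ_def)

lemma cyc_succ_neq: "k < nc \<Longrightarrow> cyc_succ k \<noteq> k"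
  using cyc_succ_cases[of k] nc_ge_3 by auto

lemma cyc_succ_inj: "k < nc \<Longrightarrow> l < nc \<Longrightarrow> cyc_succ k = cyc_succ l \<Longrightarrow> k = l"
  using cyc_succ_cases[of k] cyc_succ_cases[of l] by auto

text \<open>This is where \<open>nc \<ge> 3\<close> enters: a cycle of length 2 would be a double edge.\<close>

lemma cyc_succ_not_swap: "k < nc \<Longrightarrow> l < nc \<Longrightarrow> k = cyc_succ l \<Longrightarrow> cyc_succ k = l \<Longrightarrow> False"
  using cyc_succ_cases[of k] cyc_succ_cases[of l] nc_ge_3 by auto

lemma bij_betw_cyc_succ: "bij_betw cyc_succ {..<nc} {..<nc}"
proof -
  have inj: "inj_on cyc_succ {..<nc}" using cyc_succ_inj unfolding inj_on_def by auto
  have "cyc_succ ` {..<nc} = {..<nc}" by (rule endo_inj_surj) (use inj cyc_succ_less in auto)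
  then show ?thesis using inj unfolding bij_betw_def by simp
qed

definition edges :: "(nat \<times> nat) set" where "edges = {..<m} \<times> {..<nc}"
definition tail :: "nat \<times> nat \<Rightarrow> 'v" where "tail x = node x"
definition head :: "nat \<times> nat \<Rightarrow> 'v" where "head x = node (fst x, cyc_succ (snd x))"

lemma edge_ends_in_cycle_nodes:
  "x \<in> edges \<Longrightarrow> x \<in> cycle_nodes nc m"
  "x \<in> edges \<Longrightarrow> (fst x, cyc_succ (snd x)) \<in> cycle_nodes nc m"
  by (auto simp: edges_def cycle_nodes_def cyc_succ_less)

lemma edge_eq_imp_eq:
  assumes x: "x \<in> edges" and y: "y \<in> edges" and "tail x = tail y" and "head x = head y"
  shows "x = y"
proof -
  obtain p k q l where xy: "x = (p, k)" "y = (q, l)" by (cases x, cases y)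
  have kl: "k < nc" "l < nc" using x y xy by (auto simp: edges_def)
  have nodes: "(p, k) \<in> cycle_nodes nc m" "(q, l) \<in> cycle_nodes nc m"
    "(p, cyc_succ k) \<in> cycle_nodes nc m" "(q, cyc_succ l) \<in> cycle_nodes nc m"
    using edge_ends_in_cycle_nodes x y xy by auto
  have eq: "node (p, k) = node (q, l)" "node (p, cyc_succ k) = node (q, cyc_succ l)"
    using assms xy by (auto simp: tail_def head_def)
  consider "p = q" | "p < q" | "q < p" by linarith
  then show ?thesis
  proof cases
    case 1 then show ?thesis using node_eq_same_cycle[OF nodes(1,2) eq(1)] xy by simp
  next
    case 2
    then have "linked (p, k) (q, l)" "linked (p, cyc_succ k) (q, cyc_succ l)"
      using node_eq_linked[OF nodes(1,2) eq(1)] node_eq_linked[OF nodes(3,4) eq(2)] by auto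
    then show ?thesis using linked_lower_unique cyc_succ_neq kl by fastforce
  next
    case 3
    then have "linked (q, l) (p, k)" "linked (q, cyc_succ l) (p, cyc_succ k)"
      using node_eq_linked[OF nodes(2,1) eq(1)[symmetric]] node_eq_linked[OF nodes(4,3) eq(2)[symmetric]]
      by auto
    then show ?thesis using linked_lower_unique cyc_succ_neq kl by fastforce
  qed
qed

lemma edge_not_reversed:
  assumes x: "x \<in> edges" and y: "y \<in> edges" and "tail x = head y" and "head x = tail y"
  shows False
proof -
  obtain p k q l where xy: "x = (p, k)" "y = (q, l)" by (cases x, cases y)
  have kl: "k < nc" "l < nc" using x y xy by (auto simp: edges_def)
  have nodes: "(p, k) \<in> cycle_nodes nc m" "(q, l) \<in> cycle_nodes nc m"
    "(p, cyc_succ k) \<in> cycle_nodes nc m" "(q, cyc_succ l) \<in> cycle_nodes nc m"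
    using edge_ends_in_cycle_nodes x y xy by auto
  have eq: "node (p, k) = node (q, cyc_succ l)" "node (p, cyc_succ k) = node (q, l)"
    using assms xy by (auto simp: tail_def head_def)
  consider "p = q" | "p < q" | "q < p" by linarith
  then show ?thesis
  proof cases
    case 1
    then have "k = cyc_succ l" "cyc_succ k = l"
      using node_eq_same_cycle[OF nodes(1,4) eq(1)] node_eq_same_cycle[OF nodes(3,2) eq(2)] by auto
    then show ?thesis using cyc_succ_not_swap kl by blast
  next
    case 2
    then have "linked (p, k) (q, cyc_succ l)" "linked (p, cyc_succ k) (q, l)"
      using node_eq_linked[OF nodes(1,4) eq(1)] node_eq_linked[OF nodes(3,2) eq(2)] by auto
    then show ?thesis using linked_lower_unique cyc_succ_neq kl by fastforce
  next
    case 3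
    then have "linked (q, cyc_succ l) (p, k)" "linked (q, l) (p, cyc_succ k)"
      using node_eq_linked[OF nodes(4,1) eq(1)[symmetric]] node_eq_linked[OF nodes(2,3) eq(2)[symmetric]]
      by auto
    then show ?thesis using linked_lower_unique cyc_succ_neq kl by fastforce
  qed
qed

lemma edge_iff_edges: "E i j \<longleftrightarrow> (\<exists>x\<in>edges. (i = tail x \<and> j = head x) \<or> (j = tail x \<and> i = head x))"
  unfolding edge_iff tail_def head_def edges_def cyc_succ_def by auto

lemma sum_adjacent_pairs:
  fixes f :: "'v \<Rightarrow> 'v \<Rightarrow> real"
  shows "(\<Sum>i\<in>UNIV. \<Sum>j\<in>UNIV. if E i j then f i j else 0)
       = (\<Sum>x\<in>edges. f (tail x) (head x) + f (head x) (tail x))"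
proof -
  have pairs: "{(i, j). E i j} = (\<lambda>x. (tail x, head x)) ` edges \<union> (\<lambda>x. (head x, tail x)) ` edges"
    unfolding edge_iff_edges by auto
  have inj: "inj_on (\<lambda>x. (tail x, head x)) edges" "inj_on (\<lambda>x. (head x, tail x)) edges"
    using edge_eq_imp_eq unfolding inj_on_def by auto
  have "(\<Sum>i\<in>UNIV. \<Sum>j\<in>UNIV. if E i j then f i j else 0) = (\<Sum>(i, j)\<in>UNIV. if E i j then f i j else 0)"
    by (simp add: sum.cartesian_product)
  also have "\<dots> = (\<Sum>(i, j)\<in>{(i, j). E i j}. f i j)"
    by (rule sum.mono_neutral_cong_right) (auto split: if_splits)
  also have "\<dots> = (\<Sum>(i, j)\<in>(\<lambda>x. (tail x, head x)) ` edges. f i j) + (\<Sum>(i, j)\<in>(\<lambda>x. (head x, tail x)) ` edges. f i j)"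
    unfolding pairs by (rule sum.union_disjoint) (use edge_not_reversed in \<open>auto simp: edges_def\<close>)
  also have "\<dots> = (\<Sum>x\<in>edges. f (tail x) (head x)) + (\<Sum>x\<in>edges. f (head x) (tail x))"
    by (simp add: sum.reindex[OF inj(1)] sum.reindex[OF inj(2)])
  finally show ?thesis by (simp add: sum.distrib)
qed

end

section \<open>The Kuramoto potential on a chain of cycles\<close>

context cactus
begin

abbreviation F :: "real ^ 'v \<Rightarrow> real ^ 'v" where "F \<equiv> kuramoto_field E"

definition phase_diff :: "real ^ 'v \<Rightarrow> nat \<times> nat \<Rightarrow> real" where
  "phase_diff z x = z $ head x - z $ tail x"

definition potential :: "real ^ 'v \<Rightarrow> real" where
  "potential z = - (\<Sum>x\<in>edges. cos (phase_diff z x))"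

lemma inner_kuramoto_field:
  "F z \<bullet> h = - (\<Sum>x\<in>edges. sin (phase_diff z x) * phase_diff h x)"
proof -
  have "F z \<bullet> h = (\<Sum>i\<in>UNIV. \<Sum>j\<in>UNIV. if E i j then sin (z $ j - z $ i) * h $ i else 0)"
    unfolding kuramoto_field_def inner_vec_def
    by (simp add: sum_distrib_right if_distrib if_distribR cong: if_cong)
  also have "\<dots> = (\<Sum>x\<in>edges. sin (z $ head x - z $ tail x) * h $ tail x
                              + sin (z $ tail x - z $ head x) * h $ head x)"
    by (rule sum_adjacent_pairs)
  also have "\<dots> = - (\<Sum>x\<in>edges. sin (phase_diff z x) * phase_diff h x)"
    unfolding phase_diff_def
    by (simp add: sin_diff sum_negf[symmetric] algebra_simps)
  finally show ?thesis .
qed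

lemma potential_has_derivative: "(potential has_derivative (\<lambda>h. - (F z \<bullet> h))) (at z)"
proof -
  have component: "((\<lambda>z. z $ v) has_derivative (\<lambda>h. h $ v)) (at z)" for v
    using bounded_linear_imp_has_derivative[OF bounded_linear_vec_nth] .
  have "(potential has_derivative
      (\<lambda>h. - (\<Sum>x\<in>edges. (h $ head x - h $ tail x) * - sin (phase_diff z x)))) (at z)"
    unfolding potential_def phase_diff_def by (intro derivative_intros component)
  then show ?thesis by (simp add: inner_kuramoto_field phase_diff_def sum_negf mult.commute)
qed

definition vertex_vec :: "(nat \<times> nat \<Rightarrow> real) \<Rightarrow> real ^ 'v" where
  "vertex_vec g = (\<chi> v. g (SOME x. x \<in> cycle_nodes nc m \<and> node x = v))"

lemma vertex_vec_node:
  assumes resp: "\<And>x y. x \<in> cycle_nodes nc m \<Longrightarrow> y \<in> cycle_nodes nc m \<Longrightarrow> node x = node y \<Longrightarrow> g x = g y"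
    and x: "x \<in> cycle_nodes nc m"
  shows "vertex_vec g $ node x = g x"
proof -
  have "\<exists>y. y \<in> cycle_nodes nc m \<and> node y = node x" using x by blast
  then have "g (SOME y. y \<in> cycle_nodes nc m \<and> node y = node x) = g x"
    using resp x by (metis (mono_tags, lifting) someI_ex)
  then show ?thesis unfolding vertex_vec_def by simp
qed

lemma vertex_vec_component: "\<exists>x \<in> cycle_nodes nc m. vertex_vec g $ v = g x"
proof -
  have "v \<in> node ` cycle_nodes nc m" using node_surj by simp
  then have "\<exists>y. y \<in> cycle_nodes nc m \<and> node y = v" by blast
  then have "(SOME y. y \<in> cycle_nodes nc m \<and> node y = v) \<in> cycle_nodes nc m"
    by (metis (mono_tags, lifting) someI_ex)
  then show ?thesis unfolding vertex_vec_def by auto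
qed

text \<open>The cycles below \<open>p\<close> hang off node \<open>b (p - 1)\<close> of cycle \<open>p\<close> and those above off node
  \<open>a p\<close>, so only the edges of cycle \<open>p\<close> see a phase difference.\<close>

definition cycle_profile :: "nat \<Rightarrow> (nat \<Rightarrow> real) \<Rightarrow> nat \<times> nat \<Rightarrow> real" where
  "cycle_profile p H x = (if fst x < p then H (b (p - 1)) else if fst x = p then H (snd x) else H (a p))"

lemma cycle_profile_linked:
  assumes "linked x y"
  shows "cycle_profile p H x = cycle_profile p H y"
proof -
  have l: "fst x < fst y" "snd x = a (fst x)" "snd y = b (fst y - 1)"
    "\<And>r. fst x < r \<Longrightarrow> r < fst y \<Longrightarrow> b (r - 1) = a r"
    using assms unfolding linked_def by auto
  consider "fst y < p" | "fst y = p" | "fst x < p" "p < fst y" | "fst x = p" | "p < fst x"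
    by linarith
  then show ?thesis
  proof cases
    case 3
    then show ?thesis using l(4)[of p] by (simp add: cycle_profile_def)
  qed (use l in \<open>auto simp: cycle_profile_def\<close>)
qed

lemma vertex_vec_cycle_profile:
  "x \<in> cycle_nodes nc m \<Longrightarrow> vertex_vec (cycle_profile p H) $ node x = cycle_profile p H x"
  by (rule vertex_vec_node) (metis node_eq_cases cycle_profile_linked)

lemma phase_diff_cycle_profile:
  assumes "x \<in> edges"
  shows "phase_diff (vertex_vec (cycle_profile p H)) x
       = (if fst x = p then H (cyc_succ (snd x)) - H (snd x) else 0)"
  using vertex_vec_cycle_profile edge_ends_in_cycle_nodes[OF assms]
  unfolding phase_diff_def tail_def head_def by (simp add: cycle_profile_def)

lemma norm_vertex_vec_cycle_profile_le:
  fixes C :: real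
  assumes H: "\<And>j. j < nc \<Longrightarrow> \<bar>H j\<bar> \<le> C" and p: "p < m"
  shows "norm (vertex_vec (cycle_profile p H)) \<le> CARD('v) * C"
proof -
  have "\<bar>cycle_profile p H x\<bar> \<le> C" if "x \<in> cycle_nodes nc m" for x
    using that p H attach_less[of p] attach_less[of "p - 1"]
    by (auto simp: cycle_profile_def cycle_nodes_def)
  then have "\<bar>vertex_vec (cycle_profile p H) $ v\<bar> \<le> C" for v
    using vertex_vec_component by metis
  then have "(\<Sum>v\<in>UNIV. \<bar>vertex_vec (cycle_profile p H) $ v\<bar>) \<le> (\<Sum>v\<in>(UNIV::'v set). C)"
    by (intro sum_mono)
  then show ?thesis using norm_le_l1_cart[of "vertex_vec (cycle_profile p H)"] by simp
qed

lemma sum_edges_on_cycle: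
  assumes p: "p < m" and zero: "\<And>q k. q \<noteq> p \<Longrightarrow> g (q, k) = 0"
  shows "(\<Sum>x\<in>edges. g x) = (\<Sum>k<nc. g (p, k))"
proof -
  have "(\<Sum>x\<in>edges. g x) = (\<Sum>q<m. \<Sum>k<nc. g (q, k))"
    unfolding edges_def by (simp add: sum.cartesian_product)
  also have "\<dots> = (\<Sum>k<nc. g (p, k))"
    using p zero by (subst sum.remove[of _ p]) (auto intro: sum.neutral)
  finally show ?thesis .
qed

lemma potential_add_cycle_profile:
  assumes p: "p < m"
  shows "potential (z + vertex_vec (cycle_profile p H)) - potential z
       = (\<Sum>k<nc. cos (phase_diff z (p, k)) - cos (phase_diff z (p, k) + (H (cyc_succ k) - H k)))"
proof -
  have "potential (z + vertex_vec (cycle_profile p H)) - potential z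
      = (\<Sum>x\<in>edges. cos (phase_diff z x) - cos (phase_diff z x + phase_diff (vertex_vec (cycle_profile p H)) x))"
    unfolding potential_def phase_diff_def by (simp add: sum_subtractf algebra_simps)
  also have "\<dots> = (\<Sum>x\<in>edges. cos (phase_diff z x) - cos (phase_diff z x
                     + (if fst x = p then H (cyc_succ (snd x)) - H (snd x) else 0)))"
    by (intro sum.cong refl) (simp add: phase_diff_cycle_profile)
  also have "\<dots> = (\<Sum>k<nc. cos (phase_diff z (p, k)) - cos (phase_diff z (p, k) + (H (cyc_succ k) - H k)))"
    by (subst sum_edges_on_cycle[OF p]) auto
  finally show ?thesis .
qed

text \<open>Testing the equilibrium equation with the indicator of one node of cycle \<open>p\<close>
  (extended constantly to the other cycles) equates the sines of its two incident edges.\<close>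

lemma equilibrium_sin_cyc_succ:
  assumes eq: "F z = 0" and p: "p < m" and k0: "k0 < nc"
  shows "sin (phase_diff z (p, k0)) = sin (phase_diff z (p, cyc_succ k0))"
proof -
  define H where "H j = (if j = cyc_succ k0 then 1 else 0 :: real)" for j
  have diff: "H (cyc_succ k) - H k = (if k = k0 then 1 else 0) - (if k = cyc_succ k0 then 1 else 0)"
    if "k < nc" for k
    using cyc_succ_inj[OF that k0] by (auto simp: H_def)
  have "0 = F z \<bullet> vertex_vec (cycle_profile p H)" using eq by simp
  also have "\<dots> = - (\<Sum>x\<in>edges. sin (phase_diff z x) *
                       (if fst x = p then H (cyc_succ (snd x)) - H (snd x) else 0))"
    unfolding inner_kuramoto_field by (intro arg_cong[where f = uminus] sum.cong refl)
      (simp add: phase_diff_cycle_profile)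
  also have "\<dots> = - (\<Sum>k<nc. sin (phase_diff z (p, k)) * (H (cyc_succ k) - H k))"
    by (subst sum_edges_on_cycle[OF p]) auto
  also have "(\<Sum>k<nc. sin (phase_diff z (p, k)) * (H (cyc_succ k) - H k))
      = (\<Sum>k<nc. (if k = k0 then sin (phase_diff z (p, k)) else 0)
                 - (if k = cyc_succ k0 then sin (phase_diff z (p, k)) else 0))"
    by (intro sum.cong refl) (simp add: diff)
  also have "\<dots> = sin (phase_diff z (p, k0)) - sin (phase_diff z (p, cyc_succ k0))"
    using k0 cyc_succ_less by (simp add: sum_subtractf sum.delta)
  finally show ?thesis by simp
qed

lemma equilibrium_same_sin:
  assumes eq: "F z = 0" and p: "p < m" and k: "k < nc" and l: "l < nc"
  shows "sin (phase_diff z (p, k)) = sin (phase_diff z (p, l))"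
proof -
  have "sin (phase_diff z (p, k)) = sin (phase_diff z (p, 0))" if "k < nc" for k
    using that
  proof (induction k)
    case (Suc k)
    then have "cyc_succ k = Suc k" using cyc_succ_cases[of k] by auto
    then show ?case using equilibrium_sin_cyc_succ[OF eq p, of k] Suc by simp
  qed simp
  then show ?thesis using k l by metis
qed

lemma sum_phase_diff_cycle: "(\<Sum>k<nc. phase_diff z (p, k)) = 0"
  using sum.reindex_bij_betw[OF bij_betw_cyc_succ, of "\<lambda>k. z $ node (p, k)"]
  unfolding phase_diff_def tail_def head_def by (simp add: sum_subtractf)

definition potential_values :: "real set" where
  "potential_values = (\<lambda>v. - (\<Sum>q<m. v q)) ` (PiE {..<m} (\<lambda>_. cycle_cos_values nc))"

lemma finite_potential_values: "finite potential_values"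
  unfolding potential_values_def by (intro finite_imageI finite_PiE) (auto simp: finite_cycle_cos_values)

lemma finite_critical_values: "finite (potential ` {z. F z = 0})"
proof (rule finite_subset[OF _ finite_potential_values])
  show "potential ` {z. F z = 0} \<subseteq> potential_values"
  proof clarify
    fix z assume eq: "F z = 0"
    define v where "v = restrict (\<lambda>q. \<Sum>k<nc. cos (phase_diff z (q, k))) {..<m}"
    have "(\<Sum>k<nc. cos (phase_diff z (q, k))) \<in> cycle_cos_values nc" if "q < m" for q
      using sum_cos_in_cycle_cos_values[OF equilibrium_same_sin[OF eq that _ cyc_succ_less] sum_phase_diff_cycle] .
    then have "v \<in> PiE {..<m} (\<lambda>_. cycle_cos_values nc)"
      unfolding v_def by auto
    moreover have "potential z = - (\<Sum>q<m. v q)"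
      unfolding potential_def v_def edges_def by (simp add: sum.cartesian_product)
    ultimately show "potential z \<in> potential_values" unfolding potential_values_def by blast
  qed
qed

definition twist_profile :: "nat \<Rightarrow> real \<Rightarrow> nat \<Rightarrow> real" where
  "twist_profile k0 u j = u * (real j - (if k0 < j then real nc else 0))"

lemma twist_profile_diff:
  assumes k: "k < nc" and k0: "k0 < nc"
  shows "twist_profile k0 u (cyc_succ k) - twist_profile k0 u k = (if k = k0 then - (real nc - 1) * u else u)"
proof -
  consider "k + 1 < nc" "cyc_succ k = k + 1" | "k + 1 = nc" "cyc_succ k = 0"
    using cyc_succ_cases[OF k] by auto
  then show ?thesis
  proof cases
    case 1
    then show ?thesis by (cases "k < k0"; cases "k = k0") (auto simp: twist_profile_def algebra_simps)
  next
    case 2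
    then have "real nc = real k + 1" by simp
    then show ?thesis using 2 k0 by (auto simp: twist_profile_def algebra_simps)
  qed
qed

lemma abs_twist_profile_le: "j < nc \<Longrightarrow> \<bar>twist_profile k0 u j\<bar> \<le> \<bar>u\<bar> * real nc"
  unfolding twist_profile_def abs_mult by (intro mult_left_mono) auto

lemma equilibrium_not_local_min_if_cos_nonpos:
  assumes eq: "F \<theta> = 0" and p: "p < m" and k0: "k0 < nc"
    and cos_nonpos: "cos (phase_diff \<theta> (p, k0)) \<le> 0" and \<delta>: "\<delta> > 0"
  shows "\<exists>y. dist y \<theta> < \<delta> \<and> potential y < potential \<theta>"
proof -
  define t where "t = min (pi / (2 * (real nc - 1))) (\<delta> / (2 * CARD('v) * nc))"
  have t: "0 < t" "t \<le> pi / (2 * (real nc - 1))" using nc_ge_3 \<delta> by (auto simp: t_def)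
  define u where "u = (if sin (phase_diff \<theta> (p, k0)) \<ge> 0 then - t else t)"
  define y where "y = \<theta> + vertex_vec (cycle_profile p (twist_profile k0 u))"
  have "potential y - potential \<theta>
      = (\<Sum>k<nc. cos (phase_diff \<theta> (p, k))
                - cos (phase_diff \<theta> (p, k) + (if k = k0 then - (real nc - 1) * u else u)))"
    unfolding y_def potential_add_cycle_profile[OF p] by (intro sum.cong refl) (simp add: twist_profile_diff k0)
  also have "\<dots> < 0"
    by (rule cycle_twist_lowers_energy[where d = "\<lambda>k. phase_diff \<theta> (p, k)",
          OF nc_ge_3 k0 equilibrium_same_sin[OF eq p _ k0] cos_nonpos t u_def])
  finally have "potential y < potential \<theta>" by simp
  have "\<bar>u\<bar> = t" using t(1) by (simp add: u_def)
  then have "dist y \<theta> \<le> CARD('v) * (t * real nc)"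
    unfolding y_def dist_norm
    using norm_vertex_vec_cycle_profile_le[where H = "twist_profile k0 u", OF abs_twist_profile_le p]
    by simp
  also have "\<dots> \<le> CARD('v) * (\<delta> / (2 * CARD('v) * nc) * real nc)"
    by (intro mult_left_mono mult_right_mono) (auto simp: t_def)
  also have "\<dots> < \<delta>" using nc_ge_3 \<delta> by simp
  finally show ?thesis using \<open>potential y < potential \<theta>\<close> by blast
qed

lemma stable_equilibrium_cos_pos:
  assumes eq: "F \<theta> = 0" and stable: "lyapunov_stable F \<theta>" and "E i j"
  shows "cos (\<theta> $ i - \<theta> $ j) > 0"
proof (rule ccontr)
  assume "\<not> cos (\<theta> $ i - \<theta> $ j) > 0"
  moreover obtain p k where "(p, k) \<in> edges"
    and ij: "(i = tail (p, k) \<and> j = head (p, k)) \<or> (j = tail (p, k) \<and> i = head (p, k))"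
    using \<open>E i j\<close> unfolding edge_iff_edges by auto
  ultimately have "p < m" "k < nc" "cos (phase_diff \<theta> (p, k)) \<le> 0"
    unfolding phase_diff_def edges_def by (auto simp: cos_diff mult.commute)
  then have "\<exists>y. dist y \<theta> < \<delta> \<and> potential y < potential \<theta>" if "\<delta> > 0" for \<delta>
    using equilibrium_not_local_min_if_cos_nonpos[OF eq] that by blast
  then show False
    using not_lyapunov_stable_if_potential_not_local_min[OF kuramoto_field_lipschitz
        norm_kuramoto_field_le potential_has_derivative finite_critical_values] stable
    by blast
qed

end

theorem mainTheorem5:
  fixes nc m :: nat and E :: "'v::finite \<Rightarrow> 'v \<Rightarrow> bool" and \<theta> :: "real ^ 'v"
  assumes "nc \<ge> 3" and "m \<ge> 1"
    and "rule_R_graph nc m E"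
    and "phase_locked E \<theta>"
    and "lyapunov_stable (kuramoto_field E) \<theta>"
  shows "\<forall>i j. E i j \<longrightarrow>
           (\<exists>k::int. - (pi / 2) < \<theta> $ i - \<theta> $ j + 2 * pi * k \<and>
                     \<theta> $ i - \<theta> $ j + 2 * pi * k < pi / 2)"
proof -
  obtain node :: "nat \<times> nat \<Rightarrow> 'v" and a b where "cactus nc m node a b E"
    using assms(1,3) unfolding rule_R_graph_def cactus_def by blast
  then interpret cactus nc m node a b E .
  have "cos (\<theta> $ i - \<theta> $ j) > 0" if "E i j" for i j
    using stable_equilibrium_cos_pos assms(4,5) that unfolding phase_locked_def by blast
  then show ?thesis using cos_pos_imp_shift_in_half_pi by blast
qed

end
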